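(* There exists a constant $\eta>0$ such that for all $r>0$ and all $c_1,c_2\in\mathbb{R}^2$ with $\|c_1-c_2\|\ge 2r$, setting $B_1=B(c_1,r)$, $B_2=B(c_2,r)$, $$\mathbb P\big(\partial Y_1\cap(B_1\cup B_2)=\emptyset\big)\le \eta\, e^{-2(1+\frac{2}{\pi})r}.$$
   Context: $Y_1$ is the stationary isotropic planar STIT tessellation at time $1$: with $\Lambda$ the motion-invariant measure on the set of lines $\mathcal H$ normalized by $\Lambda(\{H: H\cap B(0,1)\neq\emptyset\})=2$, the tessellation restricted to any bounded convex polygon $W$ is obtained by starting from $\{W\}$ and letting each cell $z$ independently live an exponential time with parameter $\Lambda(\{H:H\cap z\neq\emptyset\})$ and then split along a random line distributed as $\Lambda$ restricted to lines hitting $z$ and normalized, up to time $1$. $\partial Y_1$ denotes the skeleton (union of cell boundaries) and $B(c,r)$ the closed disk of center $c$ and radius $r$. *)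

theory Defs
  imports "HOL-Analysis.Analysis"
begin

(* Lines in the plane (identified with complex numbers) are parametrised by
   (theta, p) with theta in [0,pi), p real:  H(theta,p) = {x. x . e^{i theta} = p}. *)
definition stit_line :: "real \<Rightarrow> real \<Rightarrow> complex set" where
  "stit_line \<theta> p = {x. x \<bullet> cis \<theta> = p}"

definition stit_lower :: "real \<Rightarrow> real \<Rightarrow> complex set" where
  "stit_lower \<theta> p = {x. x \<bullet> cis \<theta> \<le> p}"

definition stit_upper :: "real \<Rightarrow> real \<Rightarrow> complex set" where
  "stit_upper \<theta> p = {x. x \<bullet> cis \<theta> \<ge> p}"

definition hitting :: "complex set \<Rightarrow> (real \<times> real) set" where
  "hitting z = {q \<in> {0..<pi} \<times> UNIV. stit_line (fst q) (snd q) \<inter> z \<noteq> {}}"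

(* Lambda = (1/pi) d theta dp : the motion invariant line measure with
   Lambda(lines hitting B(0,1)) = 2.  Lambda([z]) : *)
definition Lam :: "complex set \<Rightarrow> real" where
  "Lam z = measure lborel (hitting z) / pi"

(* One step of the recursive STIT construction, for the event that no
   segment cut up to the remaining time t hits the set A.
   F z t = probability that the STIT in cell z, run for time t, puts no
   cut through A.  The cell lives Exp(Lam z) time s, is then cut by a line
   with law Lambda restricted to [z] normalised; the cut segment must avoid A,
   and the two children evolve independently for the remaining time t - s. *)
definition stit_step ::
  "complex set \<Rightarrow> (complex set \<Rightarrow> real \<Rightarrow> ennreal) \<Rightarrow> complex set \<Rightarrow> real \<Rightarrow> ennreal" where
  "stit_step A F z t =
     ennreal (exp (- Lam z * t)) +
     (\<integral>\<^sup>+ s. indicator {0..t} s *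
        (\<integral>\<^sup>+ q. indicator (hitting z) q *
            indicator {q. stit_line (fst q) (snd q) \<inter> z \<inter> A = {}} q *
            ennreal (exp (- Lam z * s) / pi) *
            F (z \<inter> stit_lower (fst q) (snd q)) (t - s) *
            F (z \<inter> stit_upper (fst q) (snd q)) (t - s) \<partial>lborel) \<partial>lborel)"

(* P( skeleton of the STIT in window W at time t does not meet A ), for A inside
   the interior of W: the least fixed point of the recursion (= the probability,
   since only finitely many splits occur before time t almost surely). *)
definition stit_avoid_prob :: "complex set \<Rightarrow> real \<Rightarrow> complex set \<Rightarrow> ennreal" where
  "stit_avoid_prob W t A = lfp (stit_step A) W t"

end

theory Submission
  imports Defs
begin

text \<open>In the recursion for the avoidance probability a cell \<open>z\<close> may only be cut along lines
missing \<open>A \<inter> z\<close>, a set of lines of measure \<open>\<Lambda>([z]) - \<Lambda>([A \<inter> z])\<close>. The lines hitting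
\<open>A \<inter> z\<close> are covered by those hitting \<open>A\<close> inside one of the two children, so \<open>\<Lambda>([A \<inter> \<cdot>])\<close>
is subadditive under splitting and \<open>(z, t) \<mapsto> exp (- t \<Lambda>([A \<inter> z]))\<close> is a supersolution of the
recursion. The least fixed point is therefore at most \<open>exp (- t \<Lambda>([A]))\<close> when \<open>A\<close> lies in the
window. For the union of two disjoint disks of radius \<open>r\<close>, the lines of direction \<open>\<theta>\<close>
hitting it form a strip of width at least \<open>2r + min (2r) \<bar>\<langle>c\<^sub>1 - c\<^sub>2, e\<^sub>\<theta>\<rangle>\<bar>\<close>,
and integrating over \<open>\<theta> \<in> [0, \<pi>)\<close> gives \<open>\<Lambda>([A]) \<ge> 2 (1 + 2/\<pi>) r\<close>.\<close>

lemma hitting_mono: "A \<subseteq> B \<Longrightarrow> hitting A \<subseteq> hitting B"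
  unfolding hitting_def by auto

lemma hitting_eq_image:
  "hitting K = ({0..<pi} \<times> UNIV) \<inter> (\<lambda>(x, \<theta>). (\<theta>, x \<bullet> cis \<theta>)) ` (K \<times> {0..pi})"
  unfolding hitting_def stit_line_def by (auto simp: image_iff)

lemma hitting_fmeasurable:
  assumes "compact K"
  shows "hitting K \<in> fmeasurable lborel"
proof -
  let ?C = "(\<lambda>(x, \<theta>). (\<theta>, x \<bullet> cis \<theta>)) ` (K \<times> {0..pi})"
  have "compact ?C"
    using assms by (intro compact_continuous_image compact_Times)
      (auto intro!: continuous_intros simp: case_prod_unfold)
  moreover have "{0..<pi} \<times> (UNIV :: real set) \<in> sets (lborel \<Otimes>\<^sub>M lborel)"
    by (intro pair_measureI) auto
  ultimately show ?thesis
    unfolding hitting_eq_image lborel_prod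
    by (intro fmeasurableI2[OF fmeasurable_compact]) (auto simp: borel_compact)
qed

lemma Lam_mono:
  assumes "compact A" "compact B" "A \<subseteq> B"
  shows "Lam A \<le> Lam B"
  unfolding Lam_def using hitting_fmeasurable[OF assms(1)] hitting_fmeasurable[OF assms(2)]
    hitting_mono[OF assms(3)]
  by (intro divide_right_mono measure_mono_fmeasurable) (auto simp: fmeasurable_def)

lemma closed_stit_lower: "closed (stit_lower \<theta> p)"
  unfolding stit_lower_def by (intro closed_Collect_le continuous_intros)

lemma closed_stit_upper: "closed (stit_upper \<theta> p)"
  unfolding stit_upper_def by (intro closed_Collect_le continuous_intros)

lemma Lam_split_le:
  assumes "compact K"
  shows "Lam K \<le> Lam (K \<inter> stit_lower \<theta> p) + Lam (K \<inter> stit_upper \<theta> p)"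
proof -
  let ?L = "hitting (K \<inter> stit_lower \<theta> p)" and ?U = "hitting (K \<inter> stit_upper \<theta> p)"
  have L: "?L \<in> fmeasurable lborel" and U: "?U \<in> fmeasurable lborel"
    using assms by (auto intro!: hitting_fmeasurable compact_Int_closed closed_stit_lower closed_stit_upper)
  have "hitting K \<subseteq> ?L \<union> ?U"
    unfolding hitting_def stit_lower_def stit_upper_def by force
  then have "measure lborel (hitting K) \<le> measure lborel (?L \<union> ?U)"
    using hitting_fmeasurable[OF assms]
    by (intro measure_mono_fmeasurable fmeasurable.Un L U) (auto simp: fmeasurable_def)
  also have "\<dots> \<le> measure lborel ?L + measure lborel ?U"
    using L U by (intro measure_subadditive) (auto simp: fmeasurable_def)
  finally show ?thesis
    unfolding Lam_def add_divide_distrib[symmetric] by (rule divide_right_mono) simp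
qed

definition stit_first_cut_density ::
  "complex set \<Rightarrow> (complex set \<Rightarrow> real \<Rightarrow> ennreal) \<Rightarrow> complex set \<Rightarrow> real \<Rightarrow> real \<Rightarrow> real \<times> real \<Rightarrow> ennreal"
where
  "stit_first_cut_density A F z t s q =
     indicator (hitting z) q *
     indicator {q. stit_line (fst q) (snd q) \<inter> z \<inter> A = {}} q *
     ennreal (exp (- Lam z * s) / pi) *
     F (z \<inter> stit_lower (fst q) (snd q)) (t - s) *
     F (z \<inter> stit_upper (fst q) (snd q)) (t - s)"

lemma stit_step_eq:
  "stit_step A F z t = ennreal (exp (- Lam z * t)) +
     (\<integral>\<^sup>+ s. indicator {0..t} s * (\<integral>\<^sup>+ q. stit_first_cut_density A F z t s q \<partial>lborel) \<partial>lborel)"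
  unfolding stit_step_def stit_first_cut_density_def ..

definition stit_avoid_bound :: "complex set \<Rightarrow> complex set \<Rightarrow> real \<Rightarrow> ennreal" where
  "stit_avoid_bound A z t = (if compact z \<and> 0 \<le> t then ennreal (exp (- Lam (A \<inter> z) * t)) else top)"

lemma stit_first_cut_density_le:
  assumes A: "compact A" and z: "compact z" and s: "0 \<le> s" "s \<le> t"
  shows "stit_first_cut_density A (stit_avoid_bound A) z t s q
    \<le> ennreal (exp (- Lam z * s) / pi * exp (- Lam (A \<inter> z) * (t - s))) *
       indicator (hitting z - hitting (A \<inter> z)) q"
proof (cases "q \<in> hitting z \<and> stit_line (fst q) (snd q) \<inter> z \<inter> A = {}")
  case False
  then show ?thesis by (auto simp: stit_first_cut_density_def indicator_def)
next
  case True
  obtain \<theta> p where q: "q = (\<theta>, p)" by force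
  let ?zl = "z \<inter> stit_lower \<theta> p" and ?zu = "z \<inter> stit_upper \<theta> p"
  have zl: "compact ?zl" and zu: "compact ?zu"
    using z by (auto intro: compact_Int_closed closed_stit_lower closed_stit_upper)
  have split: "Lam (A \<inter> z) \<le> Lam (A \<inter> ?zl) + Lam (A \<inter> ?zu)"
    using Lam_split_le[of "A \<inter> z" \<theta> p] A z by (simp add: compact_Int Int_assoc)
  have "exp (- Lam (A \<inter> ?zl) * (t - s)) * exp (- Lam (A \<inter> ?zu) * (t - s))
      \<le> exp (- Lam (A \<inter> z) * (t - s))"
    using s mult_right_mono[OF split, of "t - s"] by (simp add: exp_add[symmetric] algebra_simps)
  then have "stit_avoid_bound A ?zl (t - s) * stit_avoid_bound A ?zu (t - s)
      \<le> ennreal (exp (- Lam (A \<inter> z) * (t - s)))"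
    using zl zu s by (simp add: stit_avoid_bound_def ennreal_mult'[symmetric] ennreal_leI)
  then have "ennreal (exp (- Lam z * s) / pi) *
      (stit_avoid_bound A ?zl (t - s) * stit_avoid_bound A ?zu (t - s))
      \<le> ennreal (exp (- Lam z * s) / pi * exp (- Lam (A \<inter> z) * (t - s)))"
    by (subst ennreal_mult') (simp_all add: mult_left_mono)
  moreover have "q \<in> hitting z - hitting (A \<inter> z)"
    using True unfolding hitting_def by auto
  ultimately show ?thesis
    using True unfolding q stit_first_cut_density_def
    by (simp add: mult.assoc)
qed

lemma stit_first_cut_integral_le:
  assumes A: "compact A" and z: "compact z" and s: "0 \<le> s" "s \<le> t"
  shows "(\<integral>\<^sup>+ q. stit_first_cut_density A (stit_avoid_bound A) z t s q \<partial>lborel)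
    \<le> ennreal ((Lam z - Lam (A \<inter> z)) * exp (- Lam (A \<inter> z) * t - (Lam z - Lam (A \<inter> z)) * s))"
proof -
  let ?D = "hitting z - hitting (A \<inter> z)"
  let ?c = "exp (- Lam z * s) / pi * exp (- Lam (A \<inter> z) * (t - s))"
  have Az: "compact (A \<inter> z)"
    using A z by (simp add: compact_Int)
  have D: "?D \<in> fmeasurable lborel"
    using hitting_fmeasurable[OF z] hitting_fmeasurable[OF Az] by (rule fmeasurable.Diff)
  have "measure lborel ?D = pi * (Lam z - Lam (A \<inter> z))"
    using hitting_fmeasurable[OF z] hitting_fmeasurable[OF Az] hitting_mono[of "A \<inter> z" z]
    by (subst measure_Diff) (auto simp: fmeasurable_def Lam_def right_diff_distrib)
  then have measure_D: "emeasure lborel ?D = ennreal (pi * (Lam z - Lam (A \<inter> z)))"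
    using emeasure_eq_measure2[OF D] by simp
  have "(\<integral>\<^sup>+ q. stit_first_cut_density A (stit_avoid_bound A) z t s q \<partial>lborel)
      \<le> (\<integral>\<^sup>+ q. ennreal ?c * indicator ?D q \<partial>lborel)"
    by (intro nn_integral_mono stit_first_cut_density_le[OF A z s])
  also have "\<dots> = ennreal ?c * emeasure lborel ?D"
    using D by (intro nn_integral_cmult_indicator) (auto simp: fmeasurable_def)
  also have "\<dots> = ennreal ((Lam z - Lam (A \<inter> z)) * exp (- Lam (A \<inter> z) * t - (Lam z - Lam (A \<inter> z)) * s))"
    using Lam_mono[OF Az z] unfolding measure_D
    by (simp add: ennreal_mult'[symmetric] mult_exp_exp field_simps)
  finally show ?thesis .
qed

lemma exp_plus_nn_integral_exp:
  fixes a g t :: real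
  assumes a: "0 \<le> a" and t: "0 \<le> t"
  shows "ennreal (exp (- (g + a) * t)) +
      (\<integral>\<^sup>+ s. ennreal (a * exp (- g * t - a * s)) * indicator {0..t} s \<partial>lborel)
    = ennreal (exp (- g * t))"
proof -
  have "exp (- (g + a) * t) \<le> exp (- g * t)"
    using a t by (simp add: algebra_simps)
  moreover have "(\<integral>\<^sup>+ s. ennreal (a * exp (- g * t - a * s)) * indicator {0..t} s \<partial>lborel)
      = ennreal (- exp (- g * t - a * t) - (- exp (- g * t - a * 0)))"
    using a t by (intro nn_integral_FTC_Icc) (auto intro!: derivative_eq_intros)
  moreover have "- exp (- g * t - a * t) - (- exp (- g * t - a * 0)) = exp (- g * t) - exp (- (g + a) * t)"
    by (simp add: algebra_simps)
  ultimately show ?thesis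
    by (simp add: ennreal_plus[symmetric] del: ennreal_plus)
qed

lemma stit_step_avoid_bound_le:
  assumes A: "compact A"
  shows "stit_step A (stit_avoid_bound A) \<le> stit_avoid_bound A"
proof (intro le_funI)
  fix z t
  show "stit_step A (stit_avoid_bound A) z t \<le> stit_avoid_bound A z t"
  proof (cases "compact z \<and> 0 \<le> t")
    case False
    then show ?thesis
      unfolding stit_avoid_bound_def if_not_P[OF False] by simp
  next
    case True
    then have z: "compact z" and t: "0 \<le> t" by auto
    define g where "g = Lam (A \<inter> z)"
    define a where "a = Lam z - g"
    have a: "0 \<le> a"
      unfolding a_def g_def using Lam_mono[of "A \<inter> z" z] A z by (simp add: compact_Int)
    have "stit_step A (stit_avoid_bound A) z t \<le> ennreal (exp (- (g + a) * t)) +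
        (\<integral>\<^sup>+ s. ennreal (a * exp (- g * t - a * s)) * indicator {0..t} s \<partial>lborel)"
      unfolding stit_step_eq
    proof (intro add_mono nn_integral_mono)
      fix s
      show "indicator {0..t} s * (\<integral>\<^sup>+ q. stit_first_cut_density A (stit_avoid_bound A) z t s q \<partial>lborel)
          \<le> ennreal (a * exp (- g * t - a * s)) * indicator {0..t} s"
        using stit_first_cut_integral_le[OF A z, of s t]
        by (cases "s \<in> {0..t}") (auto simp: a_def g_def mult.commute)
    qed (simp add: a_def)
    also have "\<dots> = ennreal (exp (- g * t))"
      using a t by (rule exp_plus_nn_integral_exp)
    finally show ?thesis
      using True by (simp add: stit_avoid_bound_def g_def)
  qed
qed

lemma stit_avoid_prob_le_exp:
  assumes "compact A" "compact W" "0 \<le> t"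
  shows "stit_avoid_prob W t A \<le> ennreal (exp (- Lam (A \<inter> W) * t))"
proof -
  have "stit_avoid_prob W t A \<le> stit_avoid_bound A W t"
    unfolding stit_avoid_prob_def
    using lfp_lowerbound[of "stit_step A", OF stit_step_avoid_bound_le[OF assms(1)]] by (auto dest: le_funD)
  then show ?thesis
    using assms by (simp add: stit_avoid_bound_def)
qed

lemma abs_diff_le_integral_abs_deriv:
  fixes f F :: "real \<Rightarrow> real"
  assumes "x \<le> y"
    and "\<And>\<theta>. \<theta> \<in> {x..y} \<Longrightarrow> (F has_real_derivative f \<theta>) (at \<theta> within {x..y})"
    and "continuous_on {x..y} f"
  shows "\<bar>F y - F x\<bar> \<le> integral {x..y} (\<lambda>\<theta>. \<bar>f \<theta>\<bar>)"
proof -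
  have "(f has_integral F y - F x) {x..y}"
    using assms by (intro fundamental_theorem_of_calculus)
      (auto simp: has_real_derivative_iff_has_vector_derivative[symmetric])
  moreover have "norm (integral {x..y} f) \<le> integral {x..y} (\<lambda>\<theta>. \<bar>f \<theta>\<bar>)"
    using assms(3) by (intro integral_norm_bound_integral integrable_continuous_interval continuous_intros) auto
  ultimately show ?thesis
    by (simp add: integral_unique)
qed

lemma integral_abs_inner_cis_ge:
  fixes w :: complex
  shows "2 * norm w \<le> integral {0..pi} (\<lambda>\<theta>. \<bar>w \<bullet> cis \<theta>\<bar>)"
proof -
  define f where "f \<theta> = Re w * cos \<theta> + Im w * sin \<theta>" for \<theta>
  define F where "F \<theta> = Re w * sin \<theta> - Im w * cos \<theta>" for \<theta>
  have f_eq: "w \<bullet> cis \<theta> = f \<theta>" for \<theta>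
    by (simp add: f_def inner_complex_def)
  have cont: "continuous_on {x..y} f" for x y
    unfolding f_def by (intro continuous_intros)
  have deriv: "(F has_real_derivative f \<theta>) (at \<theta> within S)" for \<theta> S
    unfolding F_def f_def by (auto intro!: derivative_eq_intros)
  obtain t0 where t0: "0 \<le> t0" "t0 \<le> pi" "f t0 = 0"
  proof (cases "0 \<le> Re w")
    case True
    then show ?thesis using IVT2'[of f pi 0 0, OF _ _ _ cont] that by (auto simp: f_def)
  next
    case False
    then show ?thesis using IVT'[of f 0 0 pi, OF _ _ _ cont] that by (auto simp: f_def)
  qed
  \<comment> \<open>At a zero of the integrand the primitive has modulus \<open>norm w\<close>, while \<open>F 0 = - F pi\<close>.\<close>
  have "(F t0)\<^sup>2 = (F t0)\<^sup>2 + (f t0)\<^sup>2"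
    using t0 by simp
  also have "\<dots> = ((Re w)\<^sup>2 + (Im w)\<^sup>2) * ((sin t0)\<^sup>2 + (cos t0)\<^sup>2)"
    unfolding F_def f_def power2_eq_square by algebra
  finally have "\<bar>F t0\<bar> = norm w"
    by (simp add: cmod_def real_sqrt_abs[symmetric])
  moreover have "\<bar>F t0 - F 0\<bar> \<le> integral {0..t0} (\<lambda>\<theta>. \<bar>f \<theta>\<bar>)"
    and "\<bar>F pi - F t0\<bar> \<le> integral {t0..pi} (\<lambda>\<theta>. \<bar>f \<theta>\<bar>)"
    using t0 by (auto intro!: abs_diff_le_integral_abs_deriv deriv cont)
  moreover have "integral {0..t0} (\<lambda>\<theta>. \<bar>f \<theta>\<bar>) + integral {t0..pi} (\<lambda>\<theta>. \<bar>f \<theta>\<bar>)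
      = integral {0..pi} (\<lambda>\<theta>. \<bar>f \<theta>\<bar>)"
    using t0 by (intro Henstock_Kurzweil_Integration.integral_combine integrable_continuous_interval
      continuous_intros cont)
  ultimately show ?thesis
    unfolding f_eq by (simp add: F_def)
qed

lemma integral_min_abs_inner_cis_ge:
  fixes w :: complex
  assumes s: "0 < s" "s \<le> norm w"
  shows "2 * s \<le> integral {0..pi} (\<lambda>\<theta>. min s \<bar>w \<bullet> cis \<theta>\<bar>)"
proof -
  define k where "k = s / norm w"
  have k: "0 \<le> k" "k \<le> 1" "k * norm w = s"
    using s by (auto simp: k_def divide_le_eq_1)
  have "\<bar>w \<bullet> cis \<theta>\<bar> \<le> norm w" for \<theta>
    using Cauchy_Schwarz_ineq2[of w "cis \<theta>"] by simp
  then have le_min: "k * \<bar>w \<bullet> cis \<theta>\<bar> \<le> min s \<bar>w \<bullet> cis \<theta>\<bar>" for \<theta>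
    using k mult_left_mono[of "\<bar>w \<bullet> cis \<theta>\<bar>" "norm w" k] by (simp add: mult_left_le_one_le)
  have "2 * s = k * (2 * norm w)"
    using k by simp
  also have "\<dots> \<le> k * integral {0..pi} (\<lambda>\<theta>. \<bar>w \<bullet> cis \<theta>\<bar>)"
    using k by (intro mult_left_mono integral_abs_inner_cis_ge)
  also have "\<dots> = integral {0..pi} (\<lambda>\<theta>. k * \<bar>w \<bullet> cis \<theta>\<bar>)"
    by simp
  also have "\<dots> \<le> integral {0..pi} (\<lambda>\<theta>. min s \<bar>w \<bullet> cis \<theta>\<bar>)"
    using le_min by (intro integral_le integrable_continuous_interval continuous_intros) auto
  finally show ?thesis .
qed

lemma emeasure_two_intervals_ge:
  fixes u v r :: real
  assumes r: "0 \<le> r"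
  shows "ennreal (2 * r + min (2 * r) \<bar>u - v\<bar>) \<le> emeasure lborel {p. \<bar>p - u\<bar> \<le> r \<or> \<bar>p - v\<bar> \<le> r}"
proof -
  define m M where "m = min u v" and "M = max u v"
  define c where "c = max (m + r) (M - r)"
  have "ennreal (2 * r + min (2 * r) \<bar>u - v\<bar>) = emeasure lborel {m - r..m + r} + emeasure lborel {c<..M + r}"
    using r by (simp add: c_def m_def M_def ennreal_plus[symmetric] del: ennreal_plus)
  also have "\<dots> = emeasure lborel ({m - r..m + r} \<union> {c<..M + r})"
    by (intro plus_emeasure) (auto simp: c_def)
  also have "\<dots> \<le> emeasure lborel ({u - r..u + r} \<union> {v - r..v + r})"
    by (intro emeasure_mono) (auto simp: c_def m_def M_def)
  also have "{u - r..u + r} \<union> {v - r..v + r} = {p. \<bar>p - u\<bar> \<le> r \<or> \<bar>p - v\<bar> \<le> r}"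
    by auto
  finally show ?thesis .
qed

lemma hitting_cball_if_close:
  assumes "\<theta> \<in> {0..<pi}" "\<bar>p - c \<bullet> cis \<theta>\<bar> \<le> r"
  shows "(\<theta>, p) \<in> hitting (cball c r)"
proof -
  \<comment> \<open>the foot of the perpendicular from \<open>c\<close> to the line\<close>
  let ?x = "c + (p - c \<bullet> cis \<theta>) *\<^sub>R cis \<theta>"
  have "cis \<theta> \<bullet> cis \<theta> = 1"
    by (simp add: inner_complex_def power2_eq_square[symmetric])
  then have "?x \<in> stit_line \<theta> p"
    by (simp add: stit_line_def inner_add_left)
  moreover have "?x \<in> cball c r"
    using assms(2) by (simp add: dist_norm)
  ultimately show ?thesis
    using assms(1) unfolding hitting_def by auto
qed

lemma hitting_in_sets_pair:
  assumes "compact K"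
  shows "hitting K \<in> sets (lborel \<Otimes>\<^sub>M lborel)"
  using hitting_fmeasurable[OF assms] unfolding lborel_prod by (simp add: fmeasurable_def)

lemma emeasure_hitting_eq_nn_integral:
  assumes "compact K"
  shows "emeasure lborel (hitting K) = (\<integral>\<^sup>+ \<theta>. emeasure lborel (Pair \<theta> -` hitting K) \<partial>lborel)"
  using lborel.emeasure_pair_measure_alt[OF hitting_in_sets_pair[OF assms]] by (simp add: lborel_prod)

lemma emeasure_hitting_two_balls_slice_ge:
  assumes r: "0 \<le> r" and \<theta>: "\<theta> \<in> {0..<pi}"
  shows "ennreal (2 * r + min (2 * r) \<bar>(c1 - c2) \<bullet> cis \<theta>\<bar>)
    \<le> emeasure lborel (Pair \<theta> -` hitting (cball c1 r \<union> cball c2 r))"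
proof -
  let ?A = "cball c1 r \<union> cball c2 r"
  have "ennreal (2 * r + min (2 * r) \<bar>(c1 - c2) \<bullet> cis \<theta>\<bar>)
      \<le> emeasure lborel {p. \<bar>p - c1 \<bullet> cis \<theta>\<bar> \<le> r \<or> \<bar>p - c2 \<bullet> cis \<theta>\<bar> \<le> r}"
    using emeasure_two_intervals_ge[OF r] by (simp add: inner_diff_left)
  also have "\<dots> \<le> emeasure lborel (Pair \<theta> -` hitting ?A)"
  proof (rule emeasure_mono)
    show "{p. \<bar>p - c1 \<bullet> cis \<theta>\<bar> \<le> r \<or> \<bar>p - c2 \<bullet> cis \<theta>\<bar> \<le> r} \<subseteq> Pair \<theta> -` hitting ?A"
      using hitting_cball_if_close[OF \<theta>, of _ c1 r] hitting_cball_if_close[OF \<theta>, of _ c2 r]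
        hitting_mono[of "cball c1 r" ?A] hitting_mono[of "cball c2 r" ?A] by blast
  qed (use sets_Pair1[OF hitting_in_sets_pair[of ?A]] in \<open>simp add: compact_Un\<close>)
  finally show ?thesis .
qed

lemma Lam_two_balls_ge:
  assumes r: "0 < r" and d: "2 * r \<le> dist c1 c2"
  shows "2 * (1 + 2 / pi) * r \<le> Lam (cball c1 r \<union> cball c2 r)"
proof -
  let ?A = "cball c1 r \<union> cball c2 r"
  define h where "h \<theta> = 2 * r + min (2 * r) \<bar>(c1 - c2) \<bullet> cis \<theta>\<bar>" for \<theta>
  have cont: "continuous_on {0..pi} (\<lambda>\<theta>. min (2 * r) \<bar>(c1 - c2) \<bullet> cis \<theta>\<bar>)"
    by (intro continuous_intros)
  have "integral {0..pi} h = 2 * r * pi + integral {0..pi} (\<lambda>\<theta>. min (2 * r) \<bar>(c1 - c2) \<bullet> cis \<theta>\<bar>)"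
    unfolding h_def using cont by (subst integral_add) (auto intro: integrable_continuous_interval)
  then have "2 * pi * r + 4 * r \<le> integral {0..pi} h"
    using integral_min_abs_inner_cis_ge[of "2 * r" "c1 - c2"] r d by (simp add: dist_norm)
  then have "ennreal (2 * pi * r + 4 * r) \<le> ennreal (integral {0..pi} h)"
    by (rule ennreal_leI)
  also have "\<dots> = (\<integral>\<^sup>+ \<theta>. ennreal (indicator {0..pi} \<theta> * h \<theta>) \<partial>lborel)"
    using r by (intro nn_integral_has_integral_lebesgue[symmetric] integrable_integral)
      (auto simp: h_def intro!: integrable_continuous_interval continuous_intros)
  also have "\<dots> = (\<integral>\<^sup>+ \<theta>. indicator {0..<pi} \<theta> * ennreal (h \<theta>) \<partial>lborel)"
    by (intro nn_integral_cong_AE eventually_mono[OF AE_lborel_singleton[of pi]])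
      (auto simp: indicator_def)
  also have "\<dots> \<le> (\<integral>\<^sup>+ \<theta>. emeasure lborel (Pair \<theta> -` hitting ?A) \<partial>lborel)"
    using r emeasure_hitting_two_balls_slice_ge[of r _ c1 c2] unfolding h_def
    by (intro nn_integral_mono) (simp split: split_indicator del: ennreal_plus)
  also have "\<dots> = ennreal (measure lborel (hitting ?A))"
    using hitting_fmeasurable[of ?A]
    by (simp add: compact_Un emeasure_hitting_eq_nn_integral[symmetric] emeasure_eq_measure2)
  finally have "2 * pi * r + 4 * r \<le> measure lborel (hitting ?A)"
    by (simp add: ennreal_le_iff)
  then have "(2 * pi * r + 4 * r) / pi \<le> Lam ?A"
    unfolding Lam_def by (rule divide_right_mono) simp
  moreover have "(2 * pi * r + 4 * r) / pi = 2 * (1 + 2 / pi) * r"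
    by (simp add: field_simps)
  ultimately show ?thesis
    by simp
qed

theorem lemma3p1:
  shows "\<exists>\<eta>>0. \<forall>r>0. \<forall>c1 c2 :: complex. \<forall>V :: complex set.
     dist c1 c2 \<ge> 2 * r \<longrightarrow> finite V \<longrightarrow>
     cball c1 r \<union> cball c2 r \<subseteq> interior (convex hull V) \<longrightarrow>
     stit_avoid_prob (convex hull V) 1 (cball c1 r \<union> cball c2 r)
       \<le> ennreal (\<eta> * exp (- 2 * (1 + 2 / pi) * r))"
proof (intro exI[of _ 1] conjI allI impI)
  fix r :: real and c1 c2 :: complex and V :: "complex set"
  assume r: "0 < r" and d: "2 * r \<le> dist c1 c2" and V: "finite V"
    and sub: "cball c1 r \<union> cball c2 r \<subseteq> interior (convex hull V)"
  let ?A = "cball c1 r \<union> cball c2 r"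
  have "?A \<inter> convex hull V = ?A"
    using sub interior_subset by blast
  then have "stit_avoid_prob (convex hull V) 1 ?A \<le> ennreal (exp (- Lam ?A))"
    using stit_avoid_prob_le_exp[of ?A "convex hull V" 1] V
    by (simp add: compact_Un compact_convex_hull finite_imp_compact)
  also have "\<dots> \<le> ennreal (1 * exp (- 2 * (1 + 2 / pi) * r))"
    using Lam_two_balls_ge[OF r d] by (intro ennreal_leI) (simp only: mult_1 exp_le_cancel_iff)
  finally show "stit_avoid_prob (convex hull V) 1 ?A \<le> ennreal (1 * exp (- 2 * (1 + 2 / pi) * r))" .
qed simp

end
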